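(* Let $G=(V,E)$ be a simple undirected graph with $V=[n]$ such that $|V|=\chi(\bar G)\,\chi(G)$. Then for every integer $k$ with $1\le k\le\chi(G)$, $$\vartheta_k(G)=\vartheta'_k(G)=\theta^1_k(G)=\theta^2_k(G)=\theta^3_k(G)=k\,\alpha(G)=\alpha_k(G).$$
   Context: $\chi(G)$ is the chromatic number of $G$ and $\bar G$ its complement. $\alpha(G)$ is the stability number; $\alpha_k(G)$ is the maximum number of vertices of an induced $k$-colorable subgraph of $G$. $J$ is the all-ones matrix, $\langle A,B\rangle=\mathrm{trace}(AB)$, $\ge0$ entrywise, $\succeq0$ positive semidefinite, $\mathbb S^n$ symmetric $n\times n$ matrices. $\vartheta_k(G)=\max\{\langle J,Z\rangle: Z\in\mathbb S^n,\ Z_{ij}=0\ (\{i,j\}\in E),\ \langle I,Z\rangle=k,\ Z\succeq0,\ I-Z\succeq0\}$, and $\vartheta'_k(G)$ is the same with the additional constraint $Z\ge0$. $\theta^1_k(G)=\max\langle I,Z\rangle$ over $Z,X\in\mathbb S^n$ subject to $Z_{ij}=0$ for $\{i,j\}\in E$; $X_{ii}=0$ for $i\in[n]$; $Z,X\ge0$; $Z-X\succeq0$; $\begin{bmatrix}1&\mathrm{diag}(Z)^{\top}\\ \mathrm{diag}(Z)&Z+(k-1)X\end{bmatrix}\succeq0$; $1-Z_{ii}-Z_{jj}+Z_{ij}+(k-1)X_{ij}\ge0$ for $i>j$; $Z_{ii}-Z_{ij}-(k-1)X_{ij}\ge0$ for $i\ne j$. $\theta^2_k(G)$ is the optimal value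 of the same problem without the last two families of linear inequalities. $\theta^3_k(G)=\max\{\langle I,Z\rangle: Z\in\mathbb S^n,\ Z_{ij}=0\ (\{i,j\}\in E),\ Z_{ii}\le1,\ Z\ge0,\ \begin{bmatrix}k&\mathrm{diag}(Z)^{\top}\\ \mathrm{diag}(Z)&Z\end{bmatrix}\succeq0\}$. *)

theory Defs
  imports Complex_Main
begin

text \<open>Graphs on the vertex set {0..<n} (standing for [n]); edges are 2-element sets.\<close>

definition simple_graph :: "nat \<Rightarrow> nat set set \<Rightarrow> bool" where
  "simple_graph n E \<longleftrightarrow> (\<forall>e\<in>E. \<exists>i j. e = {i, j} \<and> i \<noteq> j \<and> i < n \<and> j < n)"

definition compl_graph :: "nat \<Rightarrow> nat set set \<Rightarrow> nat set set" where
  "compl_graph n E = {{i, j} | i j. i \<noteq> j \<and> i < n \<and> j < n \<and> {i, j} \<notin> E}"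

definition proper_col_on :: "nat set \<Rightarrow> nat set set \<Rightarrow> nat \<Rightarrow> (nat \<Rightarrow> nat) \<Rightarrow> bool" where
  "proper_col_on S E k c \<longleftrightarrow> (\<forall>v\<in>S. c v < k) \<and>
     (\<forall>u\<in>S. \<forall>v\<in>S. {u, v} \<in> E \<longrightarrow> c u \<noteq> c v)"

definition chromatic_number :: "nat \<Rightarrow> nat set set \<Rightarrow> nat" where
  "chromatic_number n E = (LEAST k. \<exists>c. proper_col_on {0..<n} E k c)"

definition independent_set :: "nat \<Rightarrow> nat set set \<Rightarrow> nat set \<Rightarrow> bool" where
  "independent_set n E S \<longleftrightarrow> S \<subseteq> {0..<n} \<and> (\<forall>u\<in>S. \<forall>v\<in>S. {u, v} \<notin> E)"

definition stability_number :: "nat \<Rightarrow> nat set set \<Rightarrow> nat" where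
  "stability_number n E = Max {card S | S. independent_set n E S}"

definition alpha_k :: "nat \<Rightarrow> nat set set \<Rightarrow> nat \<Rightarrow> nat" where
  "alpha_k n E k = Max {card S | S. S \<subseteq> {0..<n} \<and> (\<exists>c. proper_col_on S E k c)}"

text \<open>Matrices are functions nat => nat => real, only entries with indices < m matter.\<close>

definition sym_mat :: "nat \<Rightarrow> (nat \<Rightarrow> nat \<Rightarrow> real) \<Rightarrow> bool" where
  "sym_mat m A \<longleftrightarrow> (\<forall>i<m. \<forall>j<m. A i j = A j i)"

definition psd :: "nat \<Rightarrow> (nat \<Rightarrow> nat \<Rightarrow> real) \<Rightarrow> bool" where
  "psd m A \<longleftrightarrow> sym_mat m A \<and> (\<forall>x::nat \<Rightarrow> real. (\<Sum>i<m. \<Sum>j<m. x i * A i j * x j) \<ge> 0)"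

definition nonneg_mat :: "nat \<Rightarrow> (nat \<Rightarrow> nat \<Rightarrow> real) \<Rightarrow> bool" where
  "nonneg_mat m A \<longleftrightarrow> (\<forall>i<m. \<forall>j<m. A i j \<ge> 0)"

definition trace_mat :: "nat \<Rightarrow> (nat \<Rightarrow> nat \<Rightarrow> real) \<Rightarrow> real" where
  "trace_mat m A = (\<Sum>i<m. A i i)"

definition sum_entries :: "nat \<Rightarrow> (nat \<Rightarrow> nat \<Rightarrow> real) \<Rightarrow> real" where
  "sum_entries m A = (\<Sum>i<m. \<Sum>j<m. A i j)"

definition id_mat :: "nat \<Rightarrow> nat \<Rightarrow> real" where
  "id_mat i j = (if i = j then 1 else 0)"

text \<open>The (m+1)x(m+1) matrix [[c, d^T],[d, M]], with index 0 for the border.\<close>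
definition bordered :: "real \<Rightarrow> (nat \<Rightarrow> real) \<Rightarrow> (nat \<Rightarrow> nat \<Rightarrow> real) \<Rightarrow> nat \<Rightarrow> nat \<Rightarrow> real" where
  "bordered c d M i j = (if i = 0 \<and> j = 0 then c else if i = 0 then d (j - 1)
      else if j = 0 then d (i - 1) else M (i - 1) (j - 1))"

definition zero_on_edges :: "nat set set \<Rightarrow> (nat \<Rightarrow> nat \<Rightarrow> real) \<Rightarrow> bool" where
  "zero_on_edges E Z \<longleftrightarrow> (\<forall>i j. {i, j} \<in> E \<longrightarrow> Z i j = 0)"

definition vartheta_k :: "nat \<Rightarrow> nat set set \<Rightarrow> nat \<Rightarrow> real" where
  "vartheta_k n E k = Sup {sum_entries n Z | Z. sym_mat n Z \<and> zero_on_edges E Z \<and>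
      trace_mat n Z = real k \<and> psd n Z \<and> psd n (\<lambda>i j. id_mat i j - Z i j)}"

definition vartheta'_k :: "nat \<Rightarrow> nat set set \<Rightarrow> nat \<Rightarrow> real" where
  "vartheta'_k n E k = Sup {sum_entries n Z | Z. sym_mat n Z \<and> zero_on_edges E Z \<and>
      trace_mat n Z = real k \<and> psd n Z \<and> psd n (\<lambda>i j. id_mat i j - Z i j) \<and> nonneg_mat n Z}"

definition theta2_feasible :: "nat \<Rightarrow> nat set set \<Rightarrow> nat \<Rightarrow> (nat \<Rightarrow> nat \<Rightarrow> real) \<Rightarrow> (nat \<Rightarrow> nat \<Rightarrow> real) \<Rightarrow> bool" where
  "theta2_feasible n E k Z X \<longleftrightarrow> sym_mat n Z \<and> sym_mat n X \<and> zero_on_edges E Z \<and>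
      (\<forall>i<n. X i i = 0) \<and> nonneg_mat n Z \<and> nonneg_mat n X \<and>
      psd n (\<lambda>i j. Z i j - X i j) \<and>
      psd (n + 1) (bordered 1 (\<lambda>i. Z i i) (\<lambda>i j. Z i j + (real k - 1) * X i j))"

definition theta1_k :: "nat \<Rightarrow> nat set set \<Rightarrow> nat \<Rightarrow> real" where
  "theta1_k n E k = Sup {trace_mat n Z | Z. \<exists>X. theta2_feasible n E k Z X \<and>
      (\<forall>i<n. \<forall>j<n. i > j \<longrightarrow> 1 - Z i i - Z j j + Z i j + (real k - 1) * X i j \<ge> 0) \<and>
      (\<forall>i<n. \<forall>j<n. i \<noteq> j \<longrightarrow> Z i i - Z i j - (real k - 1) * X i j \<ge> 0)}"

definition theta2_k :: "nat \<Rightarrow> nat set set \<Rightarrow> nat \<Rightarrow> real" where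
  "theta2_k n E k = Sup {trace_mat n Z | Z. \<exists>X. theta2_feasible n E k Z X}"

definition theta3_k :: "nat \<Rightarrow> nat set set \<Rightarrow> nat \<Rightarrow> real" where
  "theta3_k n E k = Sup {trace_mat n Z | Z. sym_mat n Z \<and> zero_on_edges E Z \<and>
      (\<forall>i<n. Z i i \<le> 1) \<and> nonneg_mat n Z \<and>
      psd (n + 1) (bordered (real k) (\<lambda>i. Z i i) Z)}"

end

(*
  Let m = \<chi>(co-G).  A colour class of G and a colour class of co-G (a clique of G) share at
  most one vertex, so when n = \<chi>(co-G) \<chi>(G) the pair of colours is a bijection from the
  vertices onto [\<chi>(G)] \<times> [m]: every colour class of G has exactly m vertices, and \<alpha>(G) = m.

  Upper bounds: for a psd matrix M vanishing on the edges, splitting the all-ones vector along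
  the m cliques and using 2 x'My \<le> x'Mx + y'My gives 1'M1 \<le> m tr M.  This bounds vartheta_k
  directly and, through the Schur complement (tr Z)^2 \<le> k 1'Z1 of the bordered constraint,
  the theta-relaxations as well; an induced k-colourable subgraph meets each of the m cliques in
  at most k vertices.  Lower bounds: the Gram matrix of the indicator vectors of k
  colour classes (divided by m for vartheta_k) is feasible with value k m, and the union of these
  k classes is an induced k-colourable subgraph with k m vertices.
*)
theory Submission
  imports Defs "HOL-Analysis.Convex"
begin

section \<open>Quadratic forms\<close>

definition quad_form :: "nat \<Rightarrow> (nat \<Rightarrow> nat \<Rightarrow> real) \<Rightarrow> (nat \<Rightarrow> real) \<Rightarrow> real" where
  "quad_form m M x = (\<Sum>i<m. \<Sum>j<m. x i * M i j * x j)"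

definition bilin_form :: "nat \<Rightarrow> (nat \<Rightarrow> nat \<Rightarrow> real) \<Rightarrow> (nat \<Rightarrow> real) \<Rightarrow> (nat \<Rightarrow> real) \<Rightarrow> real" where
  "bilin_form m M x y = (\<Sum>i<m. \<Sum>j<m. x i * M i j * y j)"

lemma psd_iff_quad_form: "psd m M \<longleftrightarrow> sym_mat m M \<and> (\<forall>x. 0 \<le> quad_form m M x)"
  by (simp add: psd_def quad_form_def)

lemma sum_entries_eq_quad_form: "sum_entries m M = quad_form m M (\<lambda>_. 1)"
  by (simp add: sum_entries_def quad_form_def)

lemma quad_form_cong:
  "(\<And>i. i < m \<Longrightarrow> x i = y i) \<Longrightarrow> (\<And>i j. i < m \<Longrightarrow> j < m \<Longrightarrow> A i j = B i j) \<Longrightarrow>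
   quad_form m A x = quad_form m B y"
  unfolding quad_form_def by (intro sum.cong) auto

lemma quad_form_lincomb:
  "quad_form m (\<lambda>i j. a * A i j + b * B i j) x = a * quad_form m A x + b * quad_form m B x"
  unfolding quad_form_def by (simp add: algebra_simps sum.distrib sum_distrib_left)

lemma quad_form_diff: "quad_form m (\<lambda>i j. A i j - B i j) x = quad_form m A x - quad_form m B x"
  unfolding quad_form_def by (simp add: sum_subtractf algebra_simps)

lemma quad_form_divide: "quad_form m (\<lambda>i j. A i j / r) x = quad_form m A x / r"
  unfolding quad_form_def by (simp add: sum_divide_distrib)

lemma quad_form_gram:
  "quad_form m (\<lambda>i j. \<Sum>a\<in>S. f a i * f a j) x = (\<Sum>a\<in>S. (\<Sum>i<m. f a i * x i)\<^sup>2)"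
proof -
  have "quad_form m (\<lambda>i j. \<Sum>a\<in>S. f a i * f a j) x =
      (\<Sum>i<m. \<Sum>j<m. \<Sum>a\<in>S. (f a i * x i) * (f a j * x j))"
    unfolding quad_form_def by (simp add: sum_distrib_left sum_distrib_right algebra_simps)
  also have "\<dots> = (\<Sum>a\<in>S. \<Sum>i<m. \<Sum>j<m. (f a i * x i) * (f a j * x j))"
    by (simp add: sum.swap[where B = S])
  also have "\<dots> = (\<Sum>a\<in>S. (\<Sum>i<m. f a i * x i)\<^sup>2)"
    by (simp add: power2_eq_square sum_product)
  finally show ?thesis .
qed

lemma quad_form_rank1: "quad_form m (\<lambda>i j. g i * g j) x = (\<Sum>i<m. g i * x i)\<^sup>2"
  using quad_form_gram[where S = "{()}" and f = "\<lambda>_. g"] by simp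

lemma quad_form_id_mat: "quad_form m id_mat x = (\<Sum>i<m. (x i)\<^sup>2)"
  unfolding quad_form_def id_mat_def by (simp add: power2_eq_square if_distrib if_distribR cong: if_cong)

lemma quad_form_sum:
  "quad_form m M (\<lambda>i. \<Sum>b\<in>B. v b i) = (\<Sum>b\<in>B. \<Sum>b'\<in>B. bilin_form m M (v b) (v b'))"
proof -
  have "quad_form m M (\<lambda>i. \<Sum>b\<in>B. v b i) =
      (\<Sum>i<m. \<Sum>j<m. \<Sum>b\<in>B. \<Sum>b'\<in>B. v b i * M i j * v b' j)"
    unfolding quad_form_def by (simp add: sum_distrib_left sum_distrib_right algebra_simps)
  also have "\<dots> = (\<Sum>i<m. \<Sum>b\<in>B. \<Sum>j<m. \<Sum>b'\<in>B. v b i * M i j * v b' j)"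
    by (rule sum.cong[OF refl], rule sum.swap)
  also have "\<dots> = (\<Sum>i<m. \<Sum>b\<in>B. \<Sum>b'\<in>B. \<Sum>j<m. v b i * M i j * v b' j)"
    by (rule sum.cong[OF refl], rule sum.cong[OF refl], rule sum.swap)
  also have "\<dots> = (\<Sum>b\<in>B. \<Sum>i<m. \<Sum>b'\<in>B. \<Sum>j<m. v b i * M i j * v b' j)"
    by (rule sum.swap)
  also have "\<dots> = (\<Sum>b\<in>B. \<Sum>b'\<in>B. \<Sum>i<m. \<Sum>j<m. v b i * M i j * v b' j)"
    by (rule sum.cong[OF refl], rule sum.swap)
  finally show ?thesis unfolding bilin_form_def .
qed

lemma bilin_form_le:
  assumes "psd m M"
  shows "2 * bilin_form m M x y \<le> quad_form m M x + quad_form m M y"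
proof -
  have "bilin_form m M y x = bilin_form m M x y"
    using assms unfolding psd_def sym_mat_def bilin_form_def
    by (subst sum.swap) (auto intro!: sum.cong simp: algebra_simps)
  moreover have "quad_form m M (\<lambda>i. x i - y i) =
      quad_form m M x - bilin_form m M x y - bilin_form m M y x + quad_form m M y"
    unfolding quad_form_def bilin_form_def by (simp add: algebra_simps sum.distrib sum_subtractf)
  moreover have "0 \<le> quad_form m M (\<lambda>i. x i - y i)"
    using assms by (simp add: psd_iff_quad_form)
  ultimately show ?thesis by simp
qed

lemma quad_form_sum_le:
  assumes "psd m M" and "finite B"
  shows "quad_form m M (\<lambda>i. \<Sum>b\<in>B. v b i) \<le> real (card B) * (\<Sum>b\<in>B. quad_form m M (v b))"
proof -
  have "quad_form m M (\<lambda>i. \<Sum>b\<in>B. v b i) = (\<Sum>b\<in>B. \<Sum>b'\<in>B. bilin_form m M (v b) (v b'))"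
    by (rule quad_form_sum)
  also have "\<dots> \<le> (\<Sum>b\<in>B. \<Sum>b'\<in>B. (quad_form m M (v b) + quad_form m M (v b')) / 2)"
    using bilin_form_le[OF assms(1)] by (intro sum_mono) (simp add: field_simps)
  also have "\<dots> = real (card B) * (\<Sum>b\<in>B. quad_form m M (v b))"
    by (simp add: add_divide_distrib sum.distrib flip: sum_divide_distrib sum_distrib_left)
  finally show ?thesis .
qed

lemma quad_form_bordered:
  "quad_form (Suc m) (bordered c d M) y =
     c * (y 0)\<^sup>2 + 2 * y 0 * (\<Sum>i<m. d i * y (Suc i)) + quad_form m M (\<lambda>i. y (Suc i))"
  unfolding quad_form_def bordered_def
  by (simp only: sum.lessThan_Suc_shift)
     (simp add: sum.distrib sum_distrib_left sum_distrib_right algebra_simps power2_eq_square)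

lemma sym_mat_bordered: "sym_mat m M \<Longrightarrow> sym_mat (Suc m) (bordered c d M)"
  unfolding sym_mat_def bordered_def by auto

lemma psd_bordered_quad_form_nonneg:
  assumes "psd (Suc m) (bordered c d M)"
  shows "0 \<le> quad_form m M x"
proof -
  have "0 \<le> quad_form (Suc m) (bordered c d M) (\<lambda>i. if i = 0 then 0 else x (i - 1))"
    using assms by (simp add: psd_iff_quad_form)
  then show ?thesis by (simp add: quad_form_bordered)
qed

text \<open>Schur complement: test the bordered form on the vector (-(d \<bullet> x) / c, x).\<close>
lemma psd_bordered_schur:
  assumes "psd (Suc m) (bordered c d M)" and "0 < c"
  shows "(\<Sum>i<m. d i * x i)\<^sup>2 \<le> c * quad_form m M x"
proof -
  define D where "D = (\<Sum>i<m. d i * x i)"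
  have "0 \<le> quad_form (Suc m) (bordered c d M) (\<lambda>i. if i = 0 then - D / c else x (i - 1))"
    using assms(1) by (simp add: psd_iff_quad_form)
  also have "\<dots> = quad_form m M x - D\<^sup>2 / c"
    using assms(2) by (simp add: quad_form_bordered D_def field_simps power2_eq_square)
  finally show ?thesis using assms(2) by (simp add: D_def field_simps)
qed

lemma psd_bordered_rank1: "psd (Suc m) (bordered 1 u (\<lambda>i j. u i * u j))"
  unfolding psd_iff_quad_form
proof (intro conjI allI)
  show "sym_mat (Suc m) (bordered 1 u (\<lambda>i j. u i * u j))"
    by (rule sym_mat_bordered) (simp add: sym_mat_def)
  show "0 \<le> quad_form (Suc m) (bordered 1 u (\<lambda>i j. u i * u j)) y" for y
    using zero_le_power2[of "y 0 + (\<Sum>i<m. u i * y (Suc i))"]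
    by (simp add: quad_form_bordered quad_form_rank1 power2_sum)
qed

section \<open>Upper bounds from a clique cover\<close>

lemma compl_colouring_class_clique:
  assumes "proper_col_on {0..<n} (compl_graph n E) m g"
    and "i < n" and "j < n" and "i \<noteq> j" and "g i = g j"
  shows "{i, j} \<in> E"
proof (rule ccontr)
  assume "{i, j} \<notin> E"
  with assms(2-4) have "{i, j} \<in> compl_graph n E" unfolding compl_graph_def by blast
  with assms show False unfolding proper_col_on_def by auto
qed

lemma inj_on_colour_pair:
  assumes "S \<subseteq> {0..<n}" and "proper_col_on S E k d"
    and "proper_col_on {0..<n} (compl_graph n E) m g"
  shows "inj_on (\<lambda>v. (d v, g v)) S"
proof (rule inj_onI)
  fix u v assume uv: "u \<in> S" "v \<in> S" "(d u, g u) = (d v, g v)"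
  show "u = v"
  proof (rule ccontr)
    assume "u \<noteq> v"
    with uv assms(1) have "{u, v} \<in> E" by (intro compl_colouring_class_clique[OF assms(3)]) auto
    with uv assms(2) show False unfolding proper_col_on_def by auto
  qed
qed

lemma card_colourable_le_clique_cover:
  assumes "S \<subseteq> {0..<n}" and "proper_col_on S E k d"
    and "proper_col_on {0..<n} (compl_graph n E) m g"
  shows "card S \<le> k * m"
proof -
  have "(\<lambda>v. (d v, g v)) ` S \<subseteq> {..<k} \<times> {..<m}"
    using assms unfolding proper_col_on_def by auto
  with inj_on_colour_pair[OF assms] have "card S \<le> card ({..<k} \<times> {..<m})"
    by (metis card_image card_mono finite_SigmaI finite_lessThan)
  then show ?thesis by (simp add: card_cartesian_product)
qed

lemma quad_form_ones_le_classes: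
  assumes "psd n M" and "\<forall>i<n. g i < m"
  shows "quad_form n M (\<lambda>_. 1) \<le> real m * (\<Sum>b<m. quad_form n M (\<lambda>i. of_bool (g i = b)))"
proof -
  have "quad_form n M (\<lambda>_. 1) = quad_form n M (\<lambda>i. \<Sum>b<m. of_bool (g i = b))"
    using assms(2) by (intro quad_form_cong) auto
  also have "\<dots> \<le> real (card {..<m}) * (\<Sum>b<m. quad_form n M (\<lambda>i. of_bool (g i = b)))"
    using assms(1) by (rule quad_form_sum_le) simp
  finally show ?thesis by simp
qed

lemma quad_form_clique_indicator:
  assumes "zero_on_edges E M" and "proper_col_on {0..<n} (compl_graph n E) m g"
  shows "quad_form n M (\<lambda>i. of_bool (g i = b)) = (\<Sum>i<n. of_bool (g i = b) * M i i)"
  unfolding quad_form_def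
proof (intro sum.cong refl)
  fix i assume "i \<in> {..<n}"
  have "(\<Sum>j<n. of_bool (g i = b) * M i j * of_bool (g j = b)) =
      (\<Sum>j<n. if j = i then of_bool (g i = b) * M i i else 0)"
    using \<open>i \<in> {..<n}\<close> assms compl_colouring_class_clique[OF assms(2), of i]
    by (intro sum.cong refl) (auto simp: zero_on_edges_def)
  then show "(\<Sum>j<n. of_bool (g i = b) * M i j * of_bool (g j = b)) = of_bool (g i = b) * M i i"
    using \<open>i \<in> {..<n}\<close> by simp
qed

lemma sum_class_indicators:
  fixes g :: "nat \<Rightarrow> nat" and h :: "nat \<Rightarrow> real"
  assumes "\<forall>i<n. g i < m"
  shows "(\<Sum>b<m. \<Sum>i<n. of_bool (g i = b) * h i) = (\<Sum>i<n. h i)"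
proof (subst sum.swap, intro sum.cong refl)
  fix i assume "i \<in> {..<n}"
  with assms show "(\<Sum>b<m. of_bool (g i = b) * h i) = h i"
    by (simp flip: sum_distrib_right)
qed

lemma sum_quad_form_clique_indicators:
  assumes "zero_on_edges E M" and "proper_col_on {0..<n} (compl_graph n E) m g"
  shows "(\<Sum>b<m. quad_form n M (\<lambda>i. of_bool (g i = b))) = trace_mat n M"
  using assms(2) unfolding quad_form_clique_indicator[OF assms] trace_mat_def
  by (intro sum_class_indicators) (auto simp: proper_col_on_def)

lemma quad_form_ones_le_clique_cover:
  assumes "psd n M" and "zero_on_edges E M" and "proper_col_on {0..<n} (compl_graph n E) m g"
  shows "quad_form n M (\<lambda>_. 1) \<le> real m * trace_mat n M"
  using quad_form_ones_le_classes[OF assms(1), of g m] assms(3)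
  unfolding sum_quad_form_clique_indicators[OF assms(2,3)] by (simp add: proper_col_on_def)

lemma le_of_square_le_mult:
  fixes t K :: real
  assumes "t\<^sup>2 \<le> K * t" and "0 \<le> K"
  shows "t \<le> K"
  using assms by (cases "0 < t") (auto simp: power2_eq_square)

lemma vartheta_feasible_le_clique_cover:
  assumes "zero_on_edges E Z" and "trace_mat n Z = real k" and "psd n Z"
    and "proper_col_on {0..<n} (compl_graph n E) m g"
  shows "sum_entries n Z \<le> real k * real m"
  using quad_form_ones_le_clique_cover[OF assms(3,1,4)] assms(2)
  by (simp add: sum_entries_eq_quad_form mult.commute)

lemma theta3_feasible_le_clique_cover:
  assumes "sym_mat n Z" and "zero_on_edges E Z" and "psd (n + 1) (bordered (real k) (\<lambda>i. Z i i) Z)"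
    and "proper_col_on {0..<n} (compl_graph n E) m g" and "0 < k"
  shows "trace_mat n Z \<le> real k * real m"
proof -
  have bordered: "psd (Suc n) (bordered (real k) (\<lambda>i. Z i i) Z)" using assms(3) by simp
  then have "psd n Z" using assms(1) psd_bordered_quad_form_nonneg by (auto simp: psd_iff_quad_form)
  have "(trace_mat n Z)\<^sup>2 \<le> real k * quad_form n Z (\<lambda>_. 1)"
    using psd_bordered_schur[OF bordered, of "\<lambda>_. 1"] assms(5) by (simp add: trace_mat_def)
  also have "\<dots> \<le> real k * real m * trace_mat n Z"
    using mult_left_mono[OF quad_form_ones_le_clique_cover[OF \<open>psd n Z\<close> assms(2,4)], of "real k"]
    by (simp add: mult.assoc)
  finally show ?thesis by (rule le_of_square_le_mult) simp
qed

text \<open>Since Z + (k - 1) X = k Z - (k - 1) (Z - X) with Z - X psd, the form of Z + (k - 1) X is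
  at most k times that of Z, which on the indicator of a clique is a sum of diagonal entries.\<close>
lemma theta2_feasible_le_clique_cover:
  assumes "theta2_feasible n E k Z X" and "proper_col_on {0..<n} (compl_graph n E) m g" and "1 \<le> k"
  shows "trace_mat n Z \<le> real k * real m"
proof -
  define W where "W i j = Z i j + (real k - 1) * X i j" for i j
  have sym: "sym_mat n Z" "sym_mat n X" and zero: "zero_on_edges E Z"
    and psd_diff: "psd n (\<lambda>i j. Z i j - X i j)"
    and bordered: "psd (Suc n) (bordered 1 (\<lambda>i. Z i i) W)"
    using assms(1) unfolding theta2_feasible_def W_def by auto
  have "psd n W"
    using sym psd_bordered_quad_form_nonneg[OF bordered] by (auto simp: psd_iff_quad_form sym_mat_def W_def)
  have W_le: "quad_form n W v \<le> real k * quad_form n Z v" for v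
  proof -
    have "quad_form n W v = quad_form n (\<lambda>i j. real k * Z i j + (1 - real k) * (Z i j - X i j)) v"
      by (rule quad_form_cong) (auto simp: W_def algebra_simps)
    also have "\<dots> = real k * quad_form n Z v - (real k - 1) * quad_form n (\<lambda>i j. Z i j - X i j) v"
      unfolding quad_form_lincomb by (simp add: algebra_simps)
    also have "\<dots> \<le> real k * quad_form n Z v"
      using psd_diff assms(3) by (simp add: psd_iff_quad_form)
    finally show ?thesis .
  qed
  have "(trace_mat n Z)\<^sup>2 \<le> quad_form n W (\<lambda>_. 1)"
    using psd_bordered_schur[OF bordered, of "\<lambda>_. 1"] by (simp add: trace_mat_def)
  also have "\<dots> \<le> real m * (\<Sum>b<m. quad_form n W (\<lambda>i. of_bool (g i = b)))"
    using quad_form_ones_le_classes[OF \<open>psd n W\<close>, of g m] assms(2) by (simp add: proper_col_on_def)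
  also have "\<dots> \<le> real m * (\<Sum>b<m. real k * quad_form n Z (\<lambda>i. of_bool (g i = b)))"
    by (intro mult_left_mono sum_mono W_le) auto
  also have "\<dots> = real k * real m * trace_mat n Z"
    by (simp add: sum_quad_form_clique_indicators[OF zero assms(2)] flip: sum_distrib_left)
  finally show ?thesis by (rule le_of_square_le_mult) simp
qed

section \<open>Optimal solutions from k colour classes of equal size\<close>

locale uniform_colouring =
  fixes n :: nat and E :: "nat set set" and c :: "nat \<Rightarrow> nat" and k m :: nat
  assumes colours_differ: "{i, j} \<in> E \<Longrightarrow> c i \<noteq> c j"
    and card_colour_class: "a < k \<Longrightarrow> card {i. i < n \<and> c i = a} = m"
    and k_pos: "1 \<le> k" and m_pos: "0 < m"
begin

definition class_ind :: "nat \<Rightarrow> nat \<Rightarrow> real" where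
  "class_ind a i = of_bool (c i = a)"

definition first_classes_ind :: "nat \<Rightarrow> real" where
  "first_classes_ind i = of_bool (c i < k)"

definition same_class :: "nat \<Rightarrow> nat \<Rightarrow> real" where
  "same_class i j = of_bool (c i = c j \<and> c i < k)"

text \<open>For k = 1 the numerator vanishes, so the junk value of the division by 0 never matters.\<close>
definition cross_class :: "nat \<Rightarrow> nat \<Rightarrow> real" where
  "cross_class i j = of_bool (c i \<noteq> c j \<and> c i < k \<and> c j < k) / (real k - 1)"

lemma same_class_gram: "same_class i j = (\<Sum>a<k. class_ind a i * class_ind a j)"
proof -
  have "(\<Sum>a<k. class_ind a i * class_ind a j) = (\<Sum>a<k. if a = c i then of_bool (c j = c i) else 0)"
    by (intro sum.cong) (auto simp: class_ind_def)
  then show ?thesis by (auto simp: same_class_def)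
qed

lemma first_classes_ind_sum: "first_classes_ind i = (\<Sum>a<k. class_ind a i)"
proof -
  have "(\<Sum>a<k. class_ind a i) = (\<Sum>a<k. if a = c i then 1 else 0)"
    by (intro sum.cong) (auto simp: class_ind_def)
  then show ?thesis by (simp add: first_classes_ind_def)
qed

lemma same_class_diag: "same_class i i = first_classes_ind i"
  by (simp add: same_class_def first_classes_ind_def)

lemma sum_first_classes_ind_mult:
  "(\<Sum>i<n. first_classes_ind i * x i) = (\<Sum>a<k. \<Sum>i<n. class_ind a i * x i)"
  by (simp add: first_classes_ind_sum sum_distrib_right) (rule sum.swap)

lemma quad_form_same_class: "quad_form n same_class x = (\<Sum>a<k. (\<Sum>i<n. class_ind a i * x i)\<^sup>2)"
  using quad_form_gram[of n class_ind "{..<k}" x] by (simp add: same_class_gram[abs_def])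

lemma sum_class_ind: "a < k \<Longrightarrow> (\<Sum>i<n. class_ind a i) = real m"
  using card_colour_class[of a] by (simp add: class_ind_def Int_def conj_commute)

lemma sum_first_classes_ind: "(\<Sum>i<n. first_classes_ind i) = real k * real m"
  using sum_first_classes_ind_mult[of "\<lambda>_. 1"] by (simp add: sum_class_ind)

lemma sym_mat_same_class: "sym_mat n same_class"
  by (auto simp: sym_mat_def same_class_def)

lemma same_class_zero_on_edges: "zero_on_edges E same_class"
  using colours_differ by (auto simp: zero_on_edges_def same_class_def)

lemma nonneg_mat_same_class: "nonneg_mat n same_class"
  by (simp add: nonneg_mat_def same_class_def)

lemma trace_same_class: "trace_mat n same_class = real k * real m"
  by (simp add: trace_mat_def same_class_diag sum_first_classes_ind)

lemma same_plus_cross_class: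
  "same_class i j + (real k - 1) * cross_class i j = first_classes_ind i * first_classes_ind j"
proof (cases "k = 1")
  case True
  then show ?thesis unfolding same_class_def cross_class_def first_classes_ind_def by auto
next
  case False
  with k_pos have "real k - 1 \<noteq> 0" by simp
  then show ?thesis unfolding same_class_def cross_class_def first_classes_ind_def by auto
qed

lemma cross_class_eq:
  "cross_class i j = (first_classes_ind i * first_classes_ind j - same_class i j) / (real k - 1)"
  unfolding same_class_def cross_class_def first_classes_ind_def by auto

lemma quad_form_cross_class:
  "quad_form n cross_class x =
     ((\<Sum>a<k. \<Sum>i<n. class_ind a i * x i)\<^sup>2 - (\<Sum>a<k. (\<Sum>i<n. class_ind a i * x i)\<^sup>2)) / (real k - 1)"
proof -
  have "quad_form n cross_class x =
      quad_form n (\<lambda>i j. (first_classes_ind i * first_classes_ind j - same_class i j) / (real k - 1)) x"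
    by (rule quad_form_cong) (auto simp: cross_class_eq)
  then show ?thesis
    by (simp add: quad_form_divide quad_form_diff quad_form_rank1 quad_form_same_class
        sum_first_classes_ind_mult)
qed

lemma psd_same_minus_cross_class: "psd n (\<lambda>i j. same_class i j - cross_class i j)"
  unfolding psd_iff_quad_form
proof (intro conjI allI)
  show "sym_mat n (\<lambda>i j. same_class i j - cross_class i j)"
    by (auto simp: sym_mat_def same_class_def cross_class_def)
  fix x
  define A where "A a = (\<Sum>i<n. class_ind a i * x i)" for a
  have "(\<Sum>a<k. A a)\<^sup>2 - (\<Sum>a<k. (A a)\<^sup>2) \<le> (real k - 1) * (\<Sum>a<k. (A a)\<^sup>2)"
    using sum_squared_le_sum_of_squares[of A "{..<k}"] by (simp add: algebra_simps)
  then have "((\<Sum>a<k. A a)\<^sup>2 - (\<Sum>a<k. (A a)\<^sup>2)) / (real k - 1) \<le> (\<Sum>a<k. (A a)\<^sup>2)"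
    using k_pos by (cases "k = 1") (auto simp: divide_le_eq mult.commute sum_nonneg)
  then show "0 \<le> quad_form n (\<lambda>i j. same_class i j - cross_class i j) x"
    by (simp add: quad_form_diff quad_form_same_class quad_form_cross_class A_def)
qed

lemma theta2_feasible_same_cross_class: "theta2_feasible n E k same_class cross_class"
  unfolding theta2_feasible_def
proof (intro conjI)
  show "sym_mat n cross_class" by (auto simp: sym_mat_def cross_class_def)
  show "\<forall>i<n. cross_class i i = 0" by (simp add: cross_class_def)
  show "nonneg_mat n cross_class" using k_pos by (simp add: nonneg_mat_def cross_class_def)
  have "bordered 1 (\<lambda>i. same_class i i) (\<lambda>i j. same_class i j + (real k - 1) * cross_class i j)
      = bordered 1 first_classes_ind (\<lambda>i j. first_classes_ind i * first_classes_ind j)"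
    by (simp add: same_plus_cross_class same_class_diag)
  then show "psd (n + 1) (bordered 1 (\<lambda>i. same_class i i)
      (\<lambda>i j. same_class i j + (real k - 1) * cross_class i j))"
    using psd_bordered_rank1 by simp
qed (simp_all add: sym_mat_same_class same_class_zero_on_edges nonneg_mat_same_class
                   psd_same_minus_cross_class)

lemma same_cross_class_ineqs:
  "0 \<le> 1 - same_class i i - same_class j j + same_class i j + (real k - 1) * cross_class i j"
  "0 \<le> same_class i i - same_class i j - (real k - 1) * cross_class i j"
  using same_plus_cross_class[of i j]
  by (simp_all add: same_class_diag first_classes_ind_def add.assoc algebra_simps)

lemma psd_bordered_same_class: "psd (n + 1) (bordered (real k) (\<lambda>i. same_class i i) same_class)"
  unfolding psd_iff_quad_form Suc_eq_plus1[symmetric]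
proof (intro conjI allI)
  show "sym_mat (Suc n) (bordered (real k) (\<lambda>i. same_class i i) same_class)"
    by (rule sym_mat_bordered[OF sym_mat_same_class])
  fix y
  define A where "A a = (\<Sum>i<n. class_ind a i * y (Suc i))" for a
  have "quad_form (Suc n) (bordered (real k) (\<lambda>i. same_class i i) same_class) y
      = real k * (y 0)\<^sup>2 + 2 * y 0 * (\<Sum>a<k. A a) + (\<Sum>a<k. (A a)\<^sup>2)"
    by (simp add: quad_form_bordered same_class_diag sum_first_classes_ind_mult quad_form_same_class A_def)
  also have "\<dots> = (\<Sum>a<k. (y 0 + A a)\<^sup>2)"
    by (simp add: power2_sum sum.distrib sum_distrib_left)
  finally show "0 \<le> quad_form (Suc n) (bordered (real k) (\<lambda>i. same_class i i) same_class) y"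
    by (simp add: sum_nonneg)
qed

lemma class_ind_cauchy_schwarz:
  assumes "a < k"
  shows "(\<Sum>i<n. class_ind a i * x i)\<^sup>2 \<le> real m * (\<Sum>i<n. class_ind a i * (x i)\<^sup>2)"
proof -
  have idem: "class_ind a i * class_ind a i = class_ind a i" for i
    by (simp add: class_ind_def)
  have "(\<Sum>i<n. class_ind a i * x i)\<^sup>2 = (\<Sum>i<n. class_ind a i * (class_ind a i * x i))\<^sup>2"
    by (simp add: idem flip: mult.assoc)
  also have "\<dots> \<le> (\<Sum>i<n. (class_ind a i)\<^sup>2) * (\<Sum>i<n. (class_ind a i * x i)\<^sup>2)"
    by (rule Cauchy_Schwarz_ineq_sum)
  also have "(\<Sum>i<n. (class_ind a i)\<^sup>2) = real m"
    using sum_class_ind[OF assms] by (simp add: power2_eq_square idem)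
  also have "(\<Sum>i<n. (class_ind a i * x i)\<^sup>2) = (\<Sum>i<n. class_ind a i * (x i)\<^sup>2)"
    by (intro sum.cong) (auto simp: class_ind_def)
  finally show ?thesis .
qed

lemma psd_id_minus_scaled_same_class: "psd n (\<lambda>i j. id_mat i j - same_class i j / real m)"
  unfolding psd_iff_quad_form
proof (intro conjI allI)
  show "sym_mat n (\<lambda>i j. id_mat i j - same_class i j / real m)"
    by (auto simp: sym_mat_def id_mat_def same_class_def)
  fix x
  have "quad_form n (\<lambda>i j. same_class i j / real m) x = (\<Sum>a<k. (\<Sum>i<n. class_ind a i * x i)\<^sup>2 / real m)"
    by (simp add: quad_form_divide quad_form_same_class sum_divide_distrib)
  also have "\<dots> \<le> (\<Sum>a<k. \<Sum>i<n. class_ind a i * (x i)\<^sup>2)"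
    using class_ind_cauchy_schwarz m_pos by (intro sum_mono) (simp add: divide_le_eq mult.commute)
  also have "\<dots> = (\<Sum>i<n. first_classes_ind i * (x i)\<^sup>2)"
    by (rule sum_first_classes_ind_mult[symmetric])
  also have "\<dots> \<le> quad_form n id_mat x"
    unfolding quad_form_id_mat by (intro sum_mono) (simp add: first_classes_ind_def)
  finally show "0 \<le> quad_form n (\<lambda>i j. id_mat i j - same_class i j / real m) x"
    by (simp add: quad_form_diff)
qed

lemma psd_scaled_same_class: "psd n (\<lambda>i j. same_class i j / real m)"
  unfolding psd_iff_quad_form quad_form_divide quad_form_same_class
  by (auto simp: sym_mat_def same_class_def intro!: divide_nonneg_nonneg sum_nonneg)

lemma sum_entries_scaled_same_class: "sum_entries n (\<lambda>i j. same_class i j / real m) = real k * real m"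
proof -
  have "sum_entries n (\<lambda>i j. same_class i j / real m) = (\<Sum>a<k. (real m)\<^sup>2 / real m)"
    by (simp add: sum_entries_eq_quad_form quad_form_divide quad_form_same_class sum_class_ind
        sum_divide_distrib)
  then show ?thesis using m_pos by (simp add: power2_eq_square)
qed

lemma vartheta_feasible_scaled_same_class:
  "sym_mat n (\<lambda>i j. same_class i j / real m) \<and> zero_on_edges E (\<lambda>i j. same_class i j / real m) \<and>
   trace_mat n (\<lambda>i j. same_class i j / real m) = real k \<and> psd n (\<lambda>i j. same_class i j / real m) \<and>
   psd n (\<lambda>i j. id_mat i j - same_class i j / real m) \<and> nonneg_mat n (\<lambda>i j. same_class i j / real m)"
  using psd_scaled_same_class psd_id_minus_scaled_same_class same_class_zero_on_edges
    trace_same_class nonneg_mat_same_class m_pos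
  by (auto simp: psd_def zero_on_edges_def nonneg_mat_def trace_mat_def simp flip: sum_divide_distrib)

lemma card_first_classes: "card {i. i < n \<and> c i < k} = k * m"
  using sum_first_classes_ind by (simp add: first_classes_ind_def Int_def conj_commute flip: of_nat_mult)

end

lemma Sup_eq_attained_upper_bound:
  fixes f :: "'a \<Rightarrow> real"
  assumes "P z" and "f z = v" and "\<And>z. P z \<Longrightarrow> f z \<le> v"
  shows "Sup {f z | z. P z} = v"
  using assms by (intro cSup_eq_maximum) auto

locale tight_colouring = uniform_colouring +
  fixes g :: "nat \<Rightarrow> nat"
  assumes clique_cover: "proper_col_on {0..<n} (compl_graph n E) m g"
begin

lemma vartheta_k_eq: "vartheta_k n E k = real k * real m"
  unfolding vartheta_k_def
  by (rule Sup_eq_attained_upper_bound[where z = "\<lambda>i j. same_class i j / real m"])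
    (use vartheta_feasible_scaled_same_class sum_entries_scaled_same_class
       vartheta_feasible_le_clique_cover[OF _ _ _ clique_cover] in auto)

lemma vartheta'_k_eq: "vartheta'_k n E k = real k * real m"
  unfolding vartheta'_k_def
  by (rule Sup_eq_attained_upper_bound[where z = "\<lambda>i j. same_class i j / real m"])
    (use vartheta_feasible_scaled_same_class sum_entries_scaled_same_class
       vartheta_feasible_le_clique_cover[OF _ _ _ clique_cover] in auto)

lemma theta1_k_eq: "theta1_k n E k = real k * real m"
  unfolding theta1_k_def
  by (rule Sup_eq_attained_upper_bound[where z = same_class])
    (use theta2_feasible_same_cross_class same_cross_class_ineqs trace_same_class
       theta2_feasible_le_clique_cover[OF _ clique_cover k_pos] in auto)

lemma theta2_k_eq: "theta2_k n E k = real k * real m"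
  unfolding theta2_k_def
  by (rule Sup_eq_attained_upper_bound[where z = same_class])
    (use theta2_feasible_same_cross_class trace_same_class
       theta2_feasible_le_clique_cover[OF _ clique_cover k_pos] in auto)

lemma theta3_k_eq: "theta3_k n E k = real k * real m"
  unfolding theta3_k_def
  by (rule Sup_eq_attained_upper_bound[where z = same_class])
    (use sym_mat_same_class same_class_zero_on_edges nonneg_mat_same_class psd_bordered_same_class
       trace_same_class k_pos theta3_feasible_le_clique_cover[OF _ _ _ clique_cover]
     in \<open>auto simp: same_class_def\<close>)

lemma alpha_k_eq: "alpha_k n E k = k * m"
  unfolding alpha_k_def
proof (rule Max_eqI)
  let ?cards = "{card S |S. S \<subseteq> {0..<n} \<and> (\<exists>d. proper_col_on S E k d)}"
  show le: "y \<le> k * m" if "y \<in> ?cards" for y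
    using that card_colourable_le_clique_cover[OF _ _ clique_cover] by auto
  show "finite ?cards"
    by (rule finite_subset[of _ "{..k * m}"]) (use le in auto)
  have "proper_col_on {i. i < n \<and> c i < k} E k c"
    using colours_differ by (auto simp: proper_col_on_def)
  then show "k * m \<in> ?cards"
    using card_first_classes by (intro CollectI exI[of _ "{i. i < n \<and> c i < k}"]) auto
qed

lemma stability_number_eq: "stability_number n E = m"
  unfolding stability_number_def
proof (rule Max_eqI)
  let ?cards = "{card S |S. independent_set n E S}"
  show le: "y \<le> m" if y: "y \<in> ?cards" for y
  proof -
    obtain S where "y = card S" and "independent_set n E S" using y by blast
    then have "S \<subseteq> {0..<n}" and "proper_col_on S E 1 (\<lambda>_. 0)"
      by (auto simp: independent_set_def proper_col_on_def)
    from card_colourable_le_clique_cover[OF this clique_cover] show ?thesis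
      using \<open>y = card S\<close> by simp
  qed
  show "finite ?cards"
    by (rule finite_subset[of _ "{..m}"]) (use le in auto)
  have "independent_set n E {i. i < n \<and> c i = 0}"
    by (auto simp: independent_set_def dest: colours_differ)
  then show "m \<in> ?cards"
    using card_colour_class[of 0] k_pos by force
qed

end

section \<open>Graphs with n = \<chi>(co-G) \<chi>(G)\<close>

lemma card_colour_class_of_product:
  assumes "proper_col_on {0..<n} E p c" and "proper_col_on {0..<n} (compl_graph n E) q g"
    and "n = q * p" and "a < p"
  shows "card {i. i < n \<and> c i = a} = q"
proof -
  define pair where "pair i = (c i, g i)" for i
  have inj: "inj_on pair {0..<n}"
    unfolding pair_def using assms(1,2) by (rule inj_on_colour_pair[OF order_refl])
  have image: "pair ` {0..<n} = {..<p} \<times> {..<q}"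
  proof (rule card_subset_eq)
    show "pair ` {0..<n} \<subseteq> {..<p} \<times> {..<q}"
      using assms(1,2) unfolding proper_col_on_def pair_def by auto
    show "card (pair ` {0..<n}) = card ({..<p} \<times> {..<q})"
      using inj assms(3) by (simp add: card_image card_cartesian_product)
  qed simp
  have class_image: "pair ` {i. i < n \<and> c i = a} = {a} \<times> {..<q}"
  proof
    show "pair ` {i. i < n \<and> c i = a} \<subseteq> {a} \<times> {..<q}"
      using assms(2) unfolding proper_col_on_def pair_def by auto
    show "{a} \<times> {..<q} \<subseteq> pair ` {i. i < n \<and> c i = a}"
    proof
      fix x assume x: "x \<in> {a} \<times> {..<q}"
      with assms(4) have "x \<in> pair ` {0..<n}" unfolding image by auto
      then obtain i where "i < n" "x = pair i" by auto
      with x show "x \<in> pair ` {i. i < n \<and> c i = a}" unfolding pair_def by auto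
    qed
  qed
  have "inj_on pair {i. i < n \<and> c i = a}"
    using inj by (rule inj_on_subset) auto
  then have "card {i. i < n \<and> c i = a} = card (pair ` {i. i < n \<and> c i = a})"
    by (simp add: card_image)
  then show ?thesis unfolding class_image by (simp add: card_cartesian_product)
qed

lemma chromatic_number_colouring:
  assumes "\<forall>e\<in>F. \<exists>i j. e = {i, j} \<and> i \<noteq> j"
  obtains c where "proper_col_on {0..<n} F (chromatic_number n F) c"
proof -
  have "proper_col_on {0..<n} F n id"
    using assms by (auto simp: proper_col_on_def doubleton_eq_iff)
  then have "\<exists>c. proper_col_on {0..<n} F (chromatic_number n F) c"
    unfolding chromatic_number_def by (intro LeastI[of "\<lambda>k. \<exists>c. proper_col_on {0..<n} F k c" n]) blast
  then show ?thesis using that by blast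
qed

lemma chromatic_number_0: "chromatic_number 0 F = 0"
  unfolding chromatic_number_def by (rule Least_eq_0, rule exI[of _ id]) (simp add: proper_col_on_def)

lemma simple_graph_edge_vertices:
  assumes "simple_graph n E" and "{i, j} \<in> E"
  shows "i < n" and "j < n"
  using assms unfolding simple_graph_def by (auto simp: doubleton_eq_iff)

theorem proposition1:
  fixes n k :: nat and E :: "nat set set"
  assumes "simple_graph n E"
    and "n = chromatic_number n (compl_graph n E) * chromatic_number n E"
    and "1 \<le> k" and "k \<le> chromatic_number n E"
  shows "vartheta_k n E k = vartheta'_k n E k \<and>
         vartheta'_k n E k = theta1_k n E k \<and>
         theta1_k n E k = theta2_k n E k \<and>
         theta2_k n E k = theta3_k n E k \<and>
         theta3_k n E k = real (k * stability_number n E) \<and>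
         real (k * stability_number n E) = real (alpha_k n E k)"
proof -
  let ?\<chi> = "chromatic_number n E" and ?\<chi>' = "chromatic_number n (compl_graph n E)"
  have "\<forall>e\<in>E. \<exists>i j. e = {i, j} \<and> i \<noteq> j"
    using assms(1) unfolding simple_graph_def by blast
  then obtain c where c: "proper_col_on {0..<n} E ?\<chi> c"
    by (rule chromatic_number_colouring)
  have "\<forall>e\<in>compl_graph n E. \<exists>i j. e = {i, j} \<and> i \<noteq> j"
    unfolding compl_graph_def by blast
  then obtain g where g: "proper_col_on {0..<n} (compl_graph n E) ?\<chi>' g"
    by (rule chromatic_number_colouring)
  have "0 < ?\<chi>'"
  proof (rule gr0I)
    assume "?\<chi>' = 0"
    with assms(2) have "n = 0" by simp
    with assms(3,4) show False by (simp add: chromatic_number_0)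
  qed
  have "c i \<noteq> c j" if "{i, j} \<in> E" for i j
    using c simple_graph_edge_vertices[OF assms(1) that] that unfolding proper_col_on_def by auto
  then interpret tight_colouring n E c k ?\<chi>' g
    using card_colour_class_of_product[OF c g assms(2)] assms(3,4) \<open>0 < ?\<chi>'\<close> g
    by unfold_locales auto
  show ?thesis
    using vartheta_k_eq vartheta'_k_eq theta1_k_eq theta2_k_eq theta3_k_eq stability_number_eq
      alpha_k_eq by simp
qed

end
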